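(* For any field $\mathbb{F}$, $l_0(M_2(\mathbb{F}))=2$; that is, the maximum of $l_0(\mathcal S)$ over all finite generating sets $\mathcal S$ of $M_2(\mathbb{F})$ equals $2$.
   Context: For a finite subset $\mathcal S$ of $M_n(\mathbb{F})$: a word of length $m$ in $\mathcal S$ is a product $S_1\cdots S_m$ with $S_j\in\mathcal S$. $\mathcal L_k^0(\mathcal S)$ is the linear span of all words of length between $1$ and $k$ (the identity is not automatically included), and $\mathcal L^0(\mathcal S)=\bigcup_k\mathcal L^0_k(\mathcal S)$. $\mathcal S$ is a generating set of $M_n(\mathbb{F})$ if the algebra it generates (with or without adjoining the identity; these coincide for $M_n(\mathbb{F})$) is $M_n(\mathbb{F})$. $l_0(\mathcal S)$ is the smallest $k$ with $\mathcal L_k^0(\mathcal S)=\mathcal L_{k+1}^0(\mathcal S)$, and $l_0(M_n(\mathbb{F}))$ is the maximum of $l_0(\mathcal S)$ over all finite generating sets $\mathcal S$ of $M_n(\mathbb{F})$. *)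

theory Defs
  imports "HOL-Analysis.Analysis"
begin

definition smat :: "'a::field \<Rightarrow> 'a^2^2 \<Rightarrow> 'a^2^2" where
  "smat c A = (\<chi> i j. c * A $ i $ j)"

definition lspan :: "(('a::field)^2^2) set \<Rightarrow> ('a^2^2) set" where
  "lspan X = module.span smat X"

definition words :: "nat \<Rightarrow> (('a::field)^2^2) set \<Rightarrow> ('a^2^2) set" where
  "words m S = {foldr (**) xs (mat 1) | xs. length xs = m \<and> set xs \<subseteq> S}"

definition L0 :: "nat \<Rightarrow> (('a::field)^2^2) set \<Rightarrow> ('a^2^2) set" where
  "L0 k S = lspan (\<Union>m\<in>{1..k}. words m S)"

text \<open>Subalgebras (not necessarily unital) of M_2(F) and the generated algebra.\<close>
definition subalgebra :: "(('a::field)^2^2) set \<Rightarrow> bool" where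
  "subalgebra A \<longleftrightarrow> 0 \<in> A \<and> (\<forall>x\<in>A. \<forall>y\<in>A. x + y \<in> A \<and> x ** y \<in> A)
     \<and> (\<forall>c. \<forall>x\<in>A. smat c x \<in> A)"

definition gen_alg :: "(('a::field)^2^2) set \<Rightarrow> ('a^2^2) set" where
  "gen_alg S = \<Inter>{A. S \<subseteq> A \<and> subalgebra A}"

definition generating :: "(('a::field)^2^2) set \<Rightarrow> bool" where
  "generating S \<longleftrightarrow> gen_alg S = UNIV"

definition l0 :: "(('a::field)^2^2) set \<Rightarrow> nat" where
  "l0 S = (LEAST k. L0 k S = L0 (Suc k) S)"

end

theory Submission
  imports Defs
begin

text \<open>By the Cayley--Hamilton theorem, for a 2x2 matrix \<open>a\<close> the products \<open>a a b\<close>, \<open>a b b\<close>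
  and \<open>a b a\<close> are linear combinations of words of length at most 2 in \<open>a, b\<close>. Hence a word
  \<open>x y z\<close> of length 3 lies in the span of the shorter words in \<open>x, y, z\<close> whenever \<open>x, y, z\<close>
  are linearly dependent. If they are independent, either \<open>x y\<close> lies in their span, so that
  \<open>x y z\<close> is a combination of \<open>x z, y z, z z\<close>, or \<open>x, y, z, x y\<close> is a basis of the
  4-dimensional space \<open>M\<^sub>2(F)\<close>. Thus \<open>L\<^sub>3\<^sup>0(S) = L\<^sub>2\<^sup>0(S)\<close> for every \<open>S\<close>, i.e. \<open>l\<^sub>0 \<le> 2\<close>.
  The bound is attained by \<open>{E\<^sub>1\<^sub>1, E\<^sub>1\<^sub>2 + E\<^sub>2\<^sub>1}\<close>, whose span consists of symmetric matrices
  while \<open>E\<^sub>1\<^sub>1 (E\<^sub>1\<^sub>2 + E\<^sub>2\<^sub>1) = E\<^sub>1\<^sub>2\<close> is not symmetric.\<close>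

interpretation M: vector_space "smat :: 'a::field \<Rightarrow> 'a^2^2 \<Rightarrow> 'a^2^2"
  by unfold_locales (auto simp: smat_def vec_eq_iff algebra_simps)

lemma smat_nth [simp]: "smat c A $ i $ j = c * A $ i $ j"
  by (simp add: smat_def)

lemma mat2_eq_iff:
  "(A::'a^2^2) = B \<longleftrightarrow> A$1$1 = B$1$1 \<and> A$1$2 = B$1$2 \<and> A$2$1 = B$2$1 \<and> A$2$2 = B$2$2"
  by (auto simp: vec_eq_iff forall_2)

lemma mat2_mult_nth: "((A::'a::field^2^2) ** B) $ i $ j = A$i$1 * B$1$j + A$i$2 * B$2$j"
  by (simp add: matrix_matrix_mult_def sum_2)

lemma smat_mult_left: "smat c (A::'a::field^2^2) ** B = smat c (A ** B)"
  by (simp add: mat2_eq_iff mat2_mult_nth algebra_simps)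

lemma smat_mult_right: "(A::'a::field^2^2) ** smat c B = smat c (A ** B)"
  by (simp add: mat2_eq_iff mat2_mult_nth algebra_simps)

lemma matrix_add_rdistrib: "((A::'a::field^2^2) + B) ** (C::'a^2^2) = A ** C + B ** C"
  by (simp add: mat2_eq_iff mat2_mult_nth algebra_simps vector_add_component)

lemma trace_2: "trace (A::'a::field^2^2) = A$1$1 + A$2$2"
  by (simp add: trace_def sum_2)

subsection \<open>Consequences of the Cayley--Hamilton theorem\<close>

lemma mat2_square_mult: "((a::'a::field^2^2) ** a) ** b = smat (trace a) (a ** b) - smat (det a) b"
  by (simp add: mat2_eq_iff mat2_mult_nth trace_2 det_2) algebra

lemma mat2_mult_square: "((a::'a::field^2^2) ** b) ** b = smat (trace b) (a ** b) - smat (det b) a"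
  by (simp add: mat2_eq_iff mat2_mult_nth trace_2 det_2) algebra

lemma mat2_mult_sandwich:
  "((a::'a::field^2^2) ** b) ** a
     = smat (trace b) (a ** a) + smat (trace (a ** b) - trace a * trace b) a + smat (det a) b"
  by (simp add: mat2_eq_iff mat2_mult_nth trace_2 det_2) algebra

definition unit_mat :: "2 \<Rightarrow> 2 \<Rightarrow> 'a::field^2^2" where
  "unit_mat p q = (\<chi> i j. if i = p \<and> j = q then 1 else 0)"

lemma mat2_unit_mat_expansion:
  "w = smat (w$1$1) (unit_mat 1 1) + smat (w$1$2) (unit_mat 1 2)
     + smat (w$2$1) (unit_mat 2 1) + smat (w$2$2) (unit_mat 2 2)"
  by (simp add: mat2_eq_iff unit_mat_def)

lemma span_unit_mats: "M.span {unit_mat 1 1, unit_mat 1 2, unit_mat 2 1, unit_mat 2 2} = UNIV"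
proof -
  have "w \<in> M.span {unit_mat 1 1, unit_mat 1 2, unit_mat 2 1, unit_mat 2 2}" for w :: "'a^2^2"
    by (subst mat2_unit_mat_expansion) (intro M.span_add M.span_scale M.span_base; simp)
  then show ?thesis by blast
qed

lemma span_eq_UNIV_if_independent_card_4:
  assumes "M.independent (T::('a::field^2^2) set)" "card T = 4"
  shows "M.span T = UNIV"
proof (rule ccontr)
  assume "M.span T \<noteq> UNIV"
  then obtain w where w: "w \<notin> M.span T" by auto
  have "finite T"
    using assms(2) card.infinite by fastforce
  have "w \<notin> T"
    using w M.span_base by blast
  have "insert w T \<subseteq> M.span {unit_mat 1 1, unit_mat 1 2, unit_mat 2 1, unit_mat 2 2}"
    by (simp add: span_unit_mats)
  from M.independent_span_bound[OF _ M.independent_insertI[OF w assms(1)] this]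
  have "card (insert w T)
          \<le> card {unit_mat 1 1, unit_mat 1 2, unit_mat 2 1, unit_mat 2 2 :: 'a^2^2}"
    by simp
  also have "\<dots> \<le> 4"
    by (simp add: card_insert_if)
  finally show False
    using \<open>finite T\<close> \<open>w \<notin> T\<close> assms(2) by simp
qed

lemma independent_if_not_in_span_pairs:
  assumes "z \<notin> M.span {x, y}" "y \<notin> M.span {x, z}" "x \<notin> M.span {y, z}"
  shows "M.independent {x, y, z :: 'a::field^2^2}" "card {x, y, z} = 3"
proof -
  have "y \<noteq> z" "x \<noteq> y" "x \<noteq> z" "z \<noteq> 0"
    using assms M.span_base M.span_zero by blast+
  moreover have "M.span {z} \<subseteq> M.span {x, z}"
    by (rule M.span_mono) auto
  ultimately show "M.independent {x, y, z}" "card {x, y, z} = 3"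
    using assms M.independent_insert[of z "{}"] M.independent_insert[of y "{z}"]
      M.independent_insert[of x "{y, z}"] by auto
qed

lemma span_pair_elim:
  assumes "u \<in> M.span {a, b :: 'a::field^2^2}"
  obtains k l where "u = smat k a + smat l b"
proof -
  obtain k where "u - smat k a \<in> M.span {b}"
    using assms by (auto simp: M.span_insert)
  then obtain l where "u - smat k a = smat l b"
    by (auto simp: M.span_singleton)
  then show thesis
    using that[of k l] by (simp add: algebra_simps)
qed

definition words_le2 :: "('a::field^2^2) set \<Rightarrow> ('a^2^2) set" where
  "words_le2 S = S \<union> {a ** b | a b. a \<in> S \<and> b \<in> S}"

lemma words_le2_mono: "S \<subseteq> T \<Longrightarrow> words_le2 S \<subseteq> words_le2 T"
  by (auto simp: words_le2_def)

lemma triple_product_in_span_if_dependent: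
  fixes x y z :: "'a::field^2^2"
  assumes "z \<in> M.span {x, y} \<or> y \<in> M.span {x, z} \<or> x \<in> M.span {y, z}"
  shows "(x ** y) ** z \<in> M.span (words_le2 {x, y, z})"
proof -
  have letter: "a \<in> M.span (words_le2 {x, y, z})" if "a \<in> {x, y, z}" for a
    using that by (intro M.span_base) (auto simp: words_le2_def)
  have pair: "a ** b \<in> M.span (words_le2 {x, y, z})" if "a \<in> {x, y, z}" "b \<in> {x, y, z}" for a b
    using that by (intro M.span_base) (auto simp: words_le2_def)
  note span_intros = M.span_add M.span_diff M.span_scale letter pair
  from assms consider (z) "z \<in> M.span {x, y}" | (y) "y \<in> M.span {x, z}" | (x) "x \<in> M.span {y, z}"
    by blast
  then show ?thesis
  proof cases
    case z
    then obtain k l where "z = smat k x + smat l y"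
      by (rule span_pair_elim)
    then have "(x ** y) ** z = smat k ((x ** y) ** x) + smat l ((x ** y) ** y)"
      by (simp add: matrix_add_ldistrib smat_mult_right)
    then show ?thesis
      unfolding mat2_mult_sandwich mat2_mult_square by (simp add: span_intros)
  next
    case y
    then obtain k l where "y = smat k x + smat l z"
      by (rule span_pair_elim)
    then have "(x ** y) ** z = smat k ((x ** x) ** z) + smat l ((x ** z) ** z)"
      by (simp add: matrix_add_ldistrib matrix_add_rdistrib smat_mult_right smat_mult_left)
    then show ?thesis
      unfolding mat2_square_mult mat2_mult_square by (simp add: span_intros)
  next
    case x
    then obtain k l where "x = smat k y + smat l z"
      by (rule span_pair_elim)
    then have "(x ** y) ** z = smat k ((y ** y) ** z) + smat l ((z ** y) ** z)"
      by (simp add: matrix_add_rdistrib smat_mult_left)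
    then show ?thesis
      unfolding mat2_square_mult mat2_mult_sandwich by (simp add: span_intros)
  qed
qed

lemma triple_product_in_span_if_independent:
  fixes x y z :: "'a::field^2^2"
  assumes indep: "M.independent {x, y, z}" and card: "card {x, y, z} = 3"
  shows "(x ** y) ** z \<in> M.span (words_le2 {x, y, z})"
proof (cases "x ** y \<in> M.span {x, y, z}")
  case True
  have "M.subspace {w. w ** z \<in> M.span (words_le2 {x, y, z})}"
    unfolding M.subspace_def
    by (simp add: matrix_add_rdistrib smat_mult_left M.span_add M.span_scale M.span_zero)
  moreover have "{x, y, z} \<subseteq> {w. w ** z \<in> M.span (words_le2 {x, y, z})}"
    unfolding words_le2_def by (blast intro: M.span_base)
  ultimately show ?thesis
    using True M.span_minimal by blast
next
  case False
  then have "x ** y \<notin> {x, y, z}"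
    by (metis M.span_base)
  then have "card (insert (x ** y) {x, y, z}) = 4"
    using card by simp
  then have "M.span (insert (x ** y) {x, y, z}) = UNIV"
    using M.independent_insertI[OF False indep] by (rule span_eq_UNIV_if_independent_card_4[rotated])
  moreover have "insert (x ** y) {x, y, z} \<subseteq> words_le2 {x, y, z}"
    unfolding words_le2_def by blast
  ultimately show ?thesis
    using M.span_mono by blast
qed

lemma triple_product_in_span:
  "((x::'a::field^2^2) ** y) ** z \<in> M.span (words_le2 {x, y, z})"
proof (cases "z \<in> M.span {x, y} \<or> y \<in> M.span {x, z} \<or> x \<in> M.span {y, z}")
  case True
  then show ?thesis
    by (rule triple_product_in_span_if_dependent)
next
  case False
  then show ?thesis
    by (intro triple_product_in_span_if_independent independent_if_not_in_span_pairs) simp_all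
qed

lemma words_1: "words 1 S = S"
  unfolding words_def by (force simp: length_Suc_conv)

lemma words_2: "words 2 S = {a ** b | a b. a \<in> S \<and> b \<in> S}"
  unfolding words_def numeral_2_eq_2 by (force simp: length_Suc_conv)

lemma words_3: "words 3 S = {(a ** b) ** c | a b c. a \<in> S \<and> b \<in> S \<and> c \<in> S}"
  unfolding words_def numeral_3_eq_3 by (force simp: length_Suc_conv matrix_mul_assoc)

lemma words_up_to_2: "(\<Union>m\<in>{1..2}. words m S) = words_le2 S"
proof -
  have "{1..2::nat} = {1, 2}"
    by auto
  then show ?thesis
    by (simp only: words_1 words_2 words_le2_def UN_insert UN_empty Un_empty_right)
qed

lemma L0_3_eq_L0_2: "L0 3 S = L0 2 (S::('a::field^2^2) set)"
proof
  have "words 3 S \<subseteq> M.span (words_le2 S)"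
  proof
    fix w
    assume "w \<in> words 3 S"
    then obtain a b c where abc: "{a, b, c} \<subseteq> S" "w = (a ** b) ** c"
      by (auto simp: words_3)
    have "M.span (words_le2 {a, b, c}) \<subseteq> M.span (words_le2 S)"
      using abc(1) by (intro M.span_mono words_le2_mono)
    then show "w \<in> M.span (words_le2 S)"
      using abc(2) triple_product_in_span by blast
  qed
  moreover have "(\<Union>m\<in>{1..3}. words m S) = words_le2 S \<union> words 3 S"
    unfolding words_up_to_2[symmetric]
    by (simp add: atLeastAtMostSuc_conv numeral_3_eq_3 numeral_2_eq_2 Un_commute)
  ultimately have "(\<Union>m\<in>{1..3}. words m S) \<subseteq> M.span (words_le2 S)"
    using M.span_superset[of "words_le2 S"] by auto
  then show "L0 3 S \<subseteq> L0 2 S"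
    unfolding L0_def lspan_def words_up_to_2 using M.span_minimal M.subspace_span by blast
  show "L0 2 S \<subseteq> L0 3 S"
    unfolding L0_def lspan_def by (intro M.span_mono UN_mono) auto
qed

lemma l0_le_2: "l0 (S::('a::field^2^2) set) \<le> 2"
  unfolding l0_def by (rule Least_le) (use L0_3_eq_L0_2[of S] in \<open>simp add: numeral_eq_Suc\<close>)

definition swap_mat :: "'a::field^2^2" where
  "swap_mat = unit_mat 1 2 + unit_mat 2 1"

lemma unit_11_mult_swap: "unit_mat 1 1 ** swap_mat = unit_mat 1 2"
  by (simp add: mat2_eq_iff mat2_mult_nth unit_mat_def swap_mat_def)

lemma subalgebra_eq_UNIV_if_unit_swap_mem:
  assumes A: "subalgebra A" and mem: "unit_mat 1 1 \<in> A" "swap_mat \<in> (A :: ('a::field^2^2) set)"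
  shows "A = UNIV"
proof -
  have closed: "x ** y \<in> A" "x + y \<in> A" if "x \<in> A" "y \<in> A" for x y
    using A that unfolding subalgebra_def by auto
  have closed_smat: "smat c x \<in> A" if "x \<in> A" for x c
    using A that unfolding subalgebra_def by auto
  have swap_mult: "swap_mat ** unit_mat 1 1 = unit_mat 2 1" "swap_mat ** unit_mat 1 2 = unit_mat 2 2"
    by (simp_all add: mat2_eq_iff mat2_mult_nth unit_mat_def swap_mat_def)
  have e12: "unit_mat 1 2 \<in> A"
    unfolding unit_11_mult_swap[symmetric] by (rule closed(1)[OF mem])
  have e21: "unit_mat 2 1 \<in> A" and e22: "unit_mat 2 2 \<in> A"
    unfolding swap_mult[symmetric] using mem e12 by (auto intro: closed(1))
  have "w \<in> A" for w
    by (subst mat2_unit_mat_expansion) (intro closed(2) closed_smat mem(1) e12 e21 e22)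
  then show "A = UNIV"
    by blast
qed

lemma generating_unit_swap: "generating {unit_mat 1 1, swap_mat :: 'a::field^2^2}"
  unfolding generating_def gen_alg_def using subalgebra_eq_UNIV_if_unit_swap_mem by blast

lemma l0_unit_swap: "l0 {unit_mat 1 1, swap_mat :: 'a::field^2^2} = 2"
  unfolding l0_def
proof (rule Least_equality)
  let ?S = "{unit_mat 1 1, swap_mat :: 'a^2^2}"
  show "L0 2 ?S = L0 (Suc 2) ?S"
    using L0_3_eq_L0_2[of ?S] by (simp add: numeral_eq_Suc)
  have L0_1: "L0 1 ?S = M.span ?S"
    by (simp add: L0_def lspan_def words_1[simplified])
  have "M.span ?S \<subseteq> {w. w$1$2 = w$2$1}"
    by (rule M.span_minimal)
      (auto simp: M.subspace_def unit_mat_def swap_mat_def vector_add_component)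
  then have "unit_mat 1 2 \<notin> L0 1 ?S"
    unfolding L0_1 by (auto simp: unit_mat_def)
  moreover have "unit_mat 1 2 \<in> L0 2 ?S"
    unfolding L0_def lspan_def words_up_to_2 words_le2_def unit_11_mult_swap[symmetric]
    by (rule M.span_base) blast
  moreover have "unit_mat 1 1 \<in> L0 1 ?S"
    unfolding L0_1 by (rule M.span_base) simp
  moreover have "unit_mat 1 1 \<noteq> (0 :: 'a^2^2)"
    by (simp add: mat2_eq_iff unit_mat_def)
  moreover have "L0 0 ?S = {0}"
    by (simp add: L0_def lspan_def)
  ultimately show "2 \<le> m" if "L0 m ?S = L0 (Suc m) ?S" for m
    using that by (cases "m = 0 \<or> m = 1") (auto simp: numeral_2_eq_2)
qed

theorem mainTheorem3:
  shows "(\<forall>S :: (('a::field)^2^2) set. finite S \<and> generating S \<longrightarrow> l0 S \<le> 2)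
       \<and> (\<exists>S :: (('a::field)^2^2) set. finite S \<and> generating S \<and> l0 S = 2)"
proof (intro conjI allI impI exI)
  show "l0 S \<le> 2" for S :: "('a^2^2) set"
    by (rule l0_le_2)
  show "finite {unit_mat 1 1, swap_mat :: 'a^2^2}" "generating {unit_mat 1 1, swap_mat :: 'a^2^2}"
    "l0 {unit_mat 1 1, swap_mat :: 'a^2^2} = 2"
    by (simp_all add: generating_unit_swap l0_unit_swap)
qed

end
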